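(* Consider the downlink SWIPT model described in the context with maximum ratio transmission, $\mathbf{w}_k=\hat{\mathbf{h}}_k/\sqrt{\mathbb{E}\{\|\hat{\mathbf{h}}_k\|^2\}}$ for $k=1,\dots,K$. Then for every $k$, $$E_k\ \ge\ \underline{E}^{\mathrm{MRT}}_k=\frac{T_D}{T}\eta_{\mathrm{EH}}(1-\alpha_k)\Big[\rho_{\mathrm{RF}}p^s_kM(\beta_k-e_k)+\beta_k\sum_{k'=1}^K\rho_{\mathrm{RF}}p^s_{k'}\Big],$$ and $$R^D_k\ \ge\ \underline{R}^{\mathrm{MRT},D}_k=\frac{T_D}{T}\log_2\!\Big(1+\frac{\rho_{\mathrm{RF}}p^s_k\alpha_kM(\beta_k-e_k)}{\alpha_k\beta_k\sum_{k'=1}^K\rho_{\mathrm{RF}}p^s_{k'}+\alpha_k\sigma^2_{\mathrm{RF},k}+\sigma^2_{k,s}}\Big).$$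
   Context: Let $M,K,T$ be positive integers, $\tau=K$, $T_D\ge 0$ an integer. Let $\Phi\in\mathbb{C}\setminus\{0\}$, $\rho>0$, $\sigma^2>0$, and let $\mathbf{D}$ be an $M\times M$ diagonal matrix with unit-modulus diagonal entries. For $k=1,\dots,K$: $\beta_k>0$, $p^p_k>0$; the channels $\mathbf{h}_k\sim\mathcal{CN}(\mathbf{0},\beta_k\mathbf{I}_M)$ are mutually independent; the pilot observation is $\mathbf{y}_k=\sqrt{\rho\tau p^p_k}\,\Phi\mathbf{D}\mathbf{h}_k+\mathbf{z}_k$ with $\mathbf{z}_k\sim\mathcal{CN}(\mathbf{0},\sigma^2\mathbf{I}_M)$ mutually independent and independent of the channels; the channel estimate is $$\hat{\mathbf{h}}_k=\frac{\rho\beta_k\tau p^p_k|\Phi|^2}{\rho\beta_k\tau p^p_k|\Phi|^2+\sigma^2}\mathbf{h}_k+\frac{\sqrt{\rho\tau p^p_k}\,\beta_k\Phi^*}{\rho\beta_k\tau p^p_k|\Phi|^2+\sigma^2}\mathbf{D}^H\mathbf{z}_k,$$ and $e_k=\frac{\beta_k\sigma^2}{\rho\tau p^p_k\beta_k|\Phi|^2+\sigma^2}$. Downlink parameters: $\rho_{\mathrm{RF}}>0$, SWIPT powers $p^s_k\ge0$, noise variances $\sigma^2_{\mathrm{RF},k}>0$ and $\sigma^2_{k,s}>0$, power-splitting coefficients $\alpha_k\in[0,1]$, energy conversion efficiency $\eta_{\mathrm{EH}}\in(0,1]$, and precoding vectors $\mathbf{w}_k\in\mathbb{C}^M$. Define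 the harvested energy $$E_k=\frac{T_D}{T}\eta_{\mathrm{EH}}(1-\alpha_k)\,\mathbb{E}\Big\{\Big|\mathbf{h}_k^H\sum_{k'=1}^K\sqrt{\rho_{\mathrm{RF}}p^s_{k'}}\,\mathbf{w}_{k'}\Big|^2\Big\},$$ the downlink SINR $$\mathrm{SINR}^D_k=\frac{\alpha_k\rho_{\mathrm{RF}}p^s_k|\mathbb{E}\{\mathbf{h}_k^H\mathbf{w}_k\}|^2}{\alpha_k\Big(\sum_{k'=1}^K\rho_{\mathrm{RF}}p^s_{k'}\mathbb{E}\{|\mathbf{h}_k^H\mathbf{w}_{k'}|^2\}-\rho_{\mathrm{RF}}p^s_k|\mathbb{E}\{\mathbf{h}_k^H\mathbf{w}_k\}|^2+\sigma^2_{\mathrm{RF},k}\Big)+\sigma^2_{k,s}},$$ and the downlink rate $R^D_k=\frac{T_D}{T}\log_2(1+\mathrm{SINR}^D_k)$. All expectations are over channels and pilot noise. *)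

theory Defs
  imports "HOL-Probability.Probability"
begin

text \<open>Vectors in C^M are functions nat => complex, components indexed by i < M.
  Users are indexed by k in {1..K}. Random vectors: h k omega i.\<close>

definition cinner :: "nat \<Rightarrow> (nat \<Rightarrow> complex) \<Rightarrow> (nat \<Rightarrow> complex) \<Rightarrow> complex" where
  "cinner M a b = (\<Sum>i<M. cnj (a i) * b i)"

text \<open>Real coordinates of the channels and pilot noises, used to state joint independence.\<close>
definition gauss_coords ::
  "(nat \<Rightarrow> 'a \<Rightarrow> nat \<Rightarrow> complex) \<Rightarrow> (nat \<Rightarrow> 'a \<Rightarrow> nat \<Rightarrow> complex) \<Rightarrow> nat \<times> nat \<times> nat \<Rightarrow> 'a \<Rightarrow> real" where
  "gauss_coords h z = (\<lambda>(c, k, i) \<omega>.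
     if c = 0 then Re (h k \<omega> i) else if c = 1 then Im (h k \<omega> i)
     else if c = 2 then Re (z k \<omega> i) else Im (z k \<omega> i))"

definition coord_index :: "nat \<Rightarrow> nat \<Rightarrow> (nat \<times> nat \<times> nat) set" where
  "coord_index K M = {(c, k, i). c < 4 \<and> k \<in> {1..K} \<and> i < M}"

definition chan_est ::
  "real \<Rightarrow> real \<Rightarrow> real \<Rightarrow> real \<Rightarrow> complex \<Rightarrow> real \<Rightarrow> (nat \<Rightarrow> complex)
    \<Rightarrow> (nat \<Rightarrow> complex) \<Rightarrow> (nat \<Rightarrow> complex) \<Rightarrow> nat \<Rightarrow> complex" where
  "chan_est rho tau pp beta Phi sigma2 d hk zk i =
     complex_of_real (rho * beta * tau * pp * (cmod Phi)\<^sup>2 / (rho * beta * tau * pp * (cmod Phi)\<^sup>2 + sigma2)) * hk i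
   + complex_of_real (sqrt (rho * tau * pp) * beta / (rho * beta * tau * pp * (cmod Phi)\<^sup>2 + sigma2))
       * cnj Phi * (cnj (d i) * zk i)"

definition est_err :: "real \<Rightarrow> real \<Rightarrow> real \<Rightarrow> real \<Rightarrow> complex \<Rightarrow> real \<Rightarrow> real" where
  "est_err rho tau pp beta Phi sigma2 = beta * sigma2 / (rho * tau * pp * beta * (cmod Phi)\<^sup>2 + sigma2)"

definition mrt_precoder ::
  "'a measure \<Rightarrow> nat \<Rightarrow> (nat \<Rightarrow> 'a \<Rightarrow> nat \<Rightarrow> complex) \<Rightarrow> nat \<Rightarrow> 'a \<Rightarrow> nat \<Rightarrow> complex" where
  "mrt_precoder P M hhat k \<omega> i =
     hhat k \<omega> i / complex_of_real (sqrt (integral\<^sup>L P (\<lambda>\<omega>. \<Sum>j<M. (cmod (hhat k \<omega> j))\<^sup>2)))"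

definition harvested_energy ::
  "'a measure \<Rightarrow> nat \<Rightarrow> nat \<Rightarrow> nat \<Rightarrow> nat \<Rightarrow> real \<Rightarrow> (nat \<Rightarrow> real) \<Rightarrow> real \<Rightarrow> (nat \<Rightarrow> real)
    \<Rightarrow> (nat \<Rightarrow> 'a \<Rightarrow> nat \<Rightarrow> complex) \<Rightarrow> (nat \<Rightarrow> 'a \<Rightarrow> nat \<Rightarrow> complex) \<Rightarrow> nat \<Rightarrow> real" where
  "harvested_energy P M K TD T etaEH alpha rhoRF ps h w k =
     real TD / real T * etaEH * (1 - alpha k) *
     integral\<^sup>L P (\<lambda>\<omega>. (cmod (cinner M (h k \<omega>)
        (\<lambda>i. \<Sum>k'=1..K. complex_of_real (sqrt (rhoRF * ps k')) * w k' \<omega> i)))\<^sup>2)"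

definition SINR_D ::
  "'a measure \<Rightarrow> nat \<Rightarrow> nat \<Rightarrow> (nat \<Rightarrow> real) \<Rightarrow> real \<Rightarrow> (nat \<Rightarrow> real) \<Rightarrow> (nat \<Rightarrow> real) \<Rightarrow> (nat \<Rightarrow> real)
    \<Rightarrow> (nat \<Rightarrow> 'a \<Rightarrow> nat \<Rightarrow> complex) \<Rightarrow> (nat \<Rightarrow> 'a \<Rightarrow> nat \<Rightarrow> complex) \<Rightarrow> nat \<Rightarrow> real" where
  "SINR_D P M K alpha rhoRF ps sRF ss h w k =
     (let g = (integral\<^sup>L P (\<lambda>\<omega>. cinner M (h k \<omega>) (w k \<omega>)) :: complex);
          q = (\<lambda>k'. integral\<^sup>L P (\<lambda>\<omega>. (cmod (cinner M (h k \<omega>) (w k' \<omega>)))\<^sup>2) :: real)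
      in alpha k * rhoRF * ps k * (cmod g)\<^sup>2 /
         (alpha k * ((\<Sum>k'=1..K. rhoRF * ps k' * q k') - rhoRF * ps k * (cmod g)\<^sup>2 + sRF k) + ss k))"

definition rate_D ::
  "'a measure \<Rightarrow> nat \<Rightarrow> nat \<Rightarrow> nat \<Rightarrow> nat \<Rightarrow> (nat \<Rightarrow> real) \<Rightarrow> real \<Rightarrow> (nat \<Rightarrow> real) \<Rightarrow> (nat \<Rightarrow> real)
    \<Rightarrow> (nat \<Rightarrow> real) \<Rightarrow> (nat \<Rightarrow> 'a \<Rightarrow> nat \<Rightarrow> complex) \<Rightarrow> (nat \<Rightarrow> 'a \<Rightarrow> nat \<Rightarrow> complex) \<Rightarrow> nat \<Rightarrow> real" where
  "rate_D P M K TD T alpha rhoRF ps sRF ss h w k =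
     real TD / real T * log 2 (1 + SINR_D P M K alpha rhoRF ps sRF ss h w k)"

end

(* With maximum ratio transmission the received amplitude h_k^H (sum_k' s_k' w_k') is a
   bilinear form sum_m c_m conj(x_a(m)) x_b(m) in the entries x of the channels and pilot
   noises, which are independent circularly-symmetric complex Gaussians with moments
   E[x^n conj(x)^m] = [n = m] n! v^n.  Only the pairings of h_(k,i) with itself have nonzero
   mean, so the mean amplitude is s_k sqrt(M (beta_k - e_k)); by Isserlis' theorem the second
   moment is |mean|^2 + sum_m |c_m|^2 v_a(m) v_b(m) = M s_k^2 (beta_k - e_k) + beta_k sum_k' s_k'^2.
   The weights s_k' = sqrt(rho_RF p^s_k') give the harvested energy, and indicator weights give the
   coherent gain and the interference powers in the SINR; both bounds in fact hold with equality. *)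
theory Submission
  imports Defs
begin

lemma Complex_eq_of_real: "Complex a b = complex_of_real a + \<i> * complex_of_real b"
  by (simp add: complex_eq_iff)

lemma integrable_Complex_iff:
  "integrable M (\<lambda>x. Complex (f x) (g x)) \<longleftrightarrow> integrable M f \<and> integrable M g"
proof
  assume "integrable M (\<lambda>x. Complex (f x) (g x))"
  from integrable_Re[OF this] integrable_Im[OF this] show "integrable M f \<and> integrable M g"
    by simp
qed (simp add: Complex_eq_of_real complex_of_real_integrable_eq)

lemma integral_Complex:
  assumes "integrable M f" "integrable M g"
  shows "(\<integral>x. Complex (f x) (g x) \<partial>M) = Complex (\<integral>x. f x \<partial>M) (\<integral>x. g x \<partial>M)"
  using assms by (simp add: Complex_eq_of_real complex_of_real_integrable_eq)

lemma (in prob_space) centered_normal_moments: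
  assumes s: "0 < s" and R: "distributed M lborel R (normal_density 0 s)"
  shows normal_integrable_power: "integrable M (\<lambda>\<omega>. R \<omega> ^ n)"
    and normal_odd_moment: "odd n \<Longrightarrow> (\<integral>\<omega>. R \<omega> ^ n \<partial>M) = 0"
    and normal_second_moment: "(\<integral>\<omega>. R \<omega> ^ 2 \<partial>M) = s\<^sup>2"
    and normal_fourth_moment: "(\<integral>\<omega>. R \<omega> ^ 4 \<partial>M) = 3 * s ^ 4"
proof -
  have moment: "(\<integral>\<omega>. R \<omega> ^ n \<partial>M) = (\<integral>x. normal_density 0 s x * (x - 0) ^ n \<partial>lborel)" for n
    using distributed_integral[OF R, of "\<lambda>x. x ^ n"] by simp
  show "integrable M (\<lambda>\<omega>. R \<omega> ^ n)"
    using distributed_integrable[OF R, of "\<lambda>x. x ^ n"] integrable_normal_moment[OF s, of 0 n]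
    by simp
  show "odd n \<Longrightarrow> (\<integral>\<omega>. R \<omega> ^ n \<partial>M) = 0"
    using moment integral_normal_moment_odd[OF s, of 0] by (auto elim!: oddE)
  show "(\<integral>\<omega>. R \<omega> ^ 2 \<partial>M) = s\<^sup>2"
    using moment[of 2] integral_normal_moment_even[OF s, of 0 1] by (simp add: power2_eq_square)
  show "(\<integral>\<omega>. R \<omega> ^ 4 \<partial>M) = 3 * s ^ 4"
    using moment[of 4] integral_normal_moment_even[OF s, of 0 2]
    by (simp add: fact_numeral field_simps power_mult_distrib)
qed

lemma (in prob_space) indep_var_integral_power_mult:
  fixes X Y :: "'a \<Rightarrow> real"
  assumes XY: "indep_var borel X borel Y"
    and "integrable M (\<lambda>\<omega>. X \<omega> ^ p)" "integrable M (\<lambda>\<omega>. Y \<omega> ^ q)"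
  shows "integrable M (\<lambda>\<omega>. X \<omega> ^ p * Y \<omega> ^ q)"
    and "(\<integral>\<omega>. X \<omega> ^ p * Y \<omega> ^ q \<partial>M) = (\<integral>\<omega>. X \<omega> ^ p \<partial>M) * (\<integral>\<omega>. Y \<omega> ^ q \<partial>M)"
proof -
  have "indep_var borel ((\<lambda>x. x ^ p) \<circ> X) borel ((\<lambda>y. y ^ q) \<circ> Y)"
    by (rule indep_var_compose[OF XY]) simp_all
  then have "indep_var borel (\<lambda>\<omega>. X \<omega> ^ p) borel (\<lambda>\<omega>. Y \<omega> ^ q)"
    by (simp add: comp_def)
  from indep_var_integrable[OF this assms(2,3)] indep_var_lebesgue_integral[OF this assms(2,3)]
  show "integrable M (\<lambda>\<omega>. X \<omega> ^ p * Y \<omega> ^ q)"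
    and "(\<integral>\<omega>. X \<omega> ^ p * Y \<omega> ^ q \<partial>M) = (\<integral>\<omega>. X \<omega> ^ p \<partial>M) * (\<integral>\<omega>. Y \<omega> ^ q \<partial>M)"
    by auto
qed

definition circ_gauss_moment :: "real \<Rightarrow> nat \<Rightarrow> nat \<Rightarrow> complex" where
  "circ_gauss_moment v n m = (if n = m then complex_of_real (fact n * v ^ n) else 0)"

lemma (in prob_space) complex_normal_moments_lower:
  fixes R I :: "'a \<Rightarrow> real"
  assumes s: "0 < s" and RI: "indep_var borel R borel I"
    and R: "distributed M lborel R (normal_density 0 s)"
    and I: "distributed M lborel I (normal_density 0 s)"
    and "m \<le> n" "n \<le> 2"
  shows "integrable M (\<lambda>\<omega>. Complex (R \<omega>) (I \<omega>) ^ n * cnj (Complex (R \<omega>) (I \<omega>)) ^ m)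
    \<and> (\<integral>\<omega>. Complex (R \<omega>) (I \<omega>) ^ n * cnj (Complex (R \<omega>) (I \<omega>)) ^ m \<partial>M)
        = circ_gauss_moment (2 * s\<^sup>2) n m"
proof -
  let ?F = "\<lambda>n m \<omega>. Complex (R \<omega>) (I \<omega>) ^ n * cnj (Complex (R \<omega>) (I \<omega>)) ^ m"
  note iR = normal_integrable_power[OF s R] and iI = normal_integrable_power[OF s I]
  note RI_int = indep_var_integral_power_mult(1)[OF RI iR iI]
    and RI_mult = indep_var_integral_power_mult(2)[OF RI iR iI]
  have "(\<integral>\<omega>. R \<omega> \<partial>M) = 0" "(\<integral>\<omega>. I \<omega> \<partial>M) = 0"
    using normal_odd_moment[OF s R, of 1] normal_odd_moment[OF s I, of 1] by simp_all
  note real_moments = this iR[of 1] iI[of 1] iR[of 2] iI[of 2] iR[of 3] iI[of 3] iR[of 4] iI[of 4]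
    normal_odd_moment[OF s R] normal_odd_moment[OF s I]
    normal_second_moment[OF s R] normal_second_moment[OF s I]
    normal_fourth_moment[OF s R] normal_fourth_moment[OF s I]
    RI_int[of 1 1] RI_mult[of 1 1] RI_int[of 1 2] RI_mult[of 1 2]
    RI_int[of 2 1] RI_mult[of 2 1] RI_int[of 2 2] RI_mult[of 2 2]
  note Complex_integral_simps = circ_gauss_moment_def integrable_Complex_iff integral_Complex
    complex_eq_iff power_mult_distrib
  from \<open>m \<le> n\<close> \<open>n \<le> 2\<close> consider "n = 0" "m = 0" | "n = 1" "m = 0" | "n = 2" "m = 0"
    | "n = 1" "m = 1" | "n = 2" "m = 1" | "n = 2" "m = 2"
    by fastforce
  then show ?thesis
  proof cases
    case 1
    then show ?thesis by (simp add: circ_gauss_moment_def prob_space)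
  next
    case 2
    then show ?thesis using real_moments by (simp add: Complex_integral_simps)
  next
    case 3
    have "?F 2 0 = (\<lambda>\<omega>. Complex (R \<omega> ^ 2 - I \<omega> ^ 2) (2 * (R \<omega> * I \<omega>)))"
      by (simp add: fun_eq_iff complex_eq_iff power2_eq_square)
    then show ?thesis unfolding 3 using real_moments by (simp add: Complex_integral_simps)
  next
    case 4
    have "?F 1 1 = (\<lambda>\<omega>. Complex (R \<omega> ^ 2 + I \<omega> ^ 2) 0)"
      by (simp add: fun_eq_iff complex_eq_iff power2_eq_square)
    then show ?thesis unfolding 4 using real_moments by (simp add: Complex_integral_simps)
  next
    case 5
    have "?F 2 1 = (\<lambda>\<omega>. Complex (R \<omega> ^ 3 + R \<omega> * I \<omega> ^ 2) (R \<omega> ^ 2 * I \<omega> + I \<omega> ^ 3))"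
      by (simp add: fun_eq_iff complex_eq_iff power2_eq_square power3_eq_cube algebra_simps)
    then show ?thesis unfolding 5 using real_moments by (simp add: Complex_integral_simps)
  next
    case 6
    have "?F 2 2 = (\<lambda>\<omega>. Complex (R \<omega> ^ 4 + 2 * (R \<omega> ^ 2 * I \<omega> ^ 2) + I \<omega> ^ 4) 0)"
      by (simp add: fun_eq_iff complex_eq_iff power2_eq_square power4_eq_xxxx algebra_simps)
    then show ?thesis unfolding 6 using real_moments by (simp add: Complex_integral_simps)
  qed
qed

lemma (in prob_space) complex_normal_moments:
  fixes R I :: "'a \<Rightarrow> real"
  assumes s: "0 < s" and RI: "indep_var borel R borel I"
    and R: "distributed M lborel R (normal_density 0 s)"
    and I: "distributed M lborel I (normal_density 0 s)"
    and "n \<le> 2" "m \<le> 2"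
  shows "integrable M (\<lambda>\<omega>. Complex (R \<omega>) (I \<omega>) ^ n * cnj (Complex (R \<omega>) (I \<omega>)) ^ m)"
    and "(\<integral>\<omega>. Complex (R \<omega>) (I \<omega>) ^ n * cnj (Complex (R \<omega>) (I \<omega>)) ^ m \<partial>M)
          = circ_gauss_moment (2 * s\<^sup>2) n m"
proof -
  let ?F = "\<lambda>n m \<omega>. Complex (R \<omega>) (I \<omega>) ^ n * cnj (Complex (R \<omega>) (I \<omega>)) ^ m"
  have "integrable M (?F n m) \<and> (\<integral>\<omega>. ?F n m \<omega> \<partial>M) = circ_gauss_moment (2 * s\<^sup>2) n m"
  proof (cases "m \<le> n")
    case True
    with complex_normal_moments_lower[OF assms(1-4)] \<open>n \<le> 2\<close> show ?thesis
      by blast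
  next
    case False
    then have "integrable M (?F m n) \<and> (\<integral>\<omega>. ?F m n \<omega> \<partial>M) = circ_gauss_moment (2 * s\<^sup>2) m n"
      using \<open>m \<le> 2\<close> by (intro complex_normal_moments_lower[OF assms(1-4)]) simp_all
    then have int: "integrable M (?F m n)" and "(\<integral>\<omega>. ?F m n \<omega> \<partial>M) = 0"
      using False by (auto simp: circ_gauss_moment_def)
    moreover have "?F n m = (\<lambda>\<omega>. cnj (?F m n \<omega>))"
      by (simp add: fun_eq_iff mult.commute)
    ultimately show ?thesis
      using False integrable_cnj[OF int] Bochner_Integration.integral_cnj[of M "?F m n"]
      by (simp add: circ_gauss_moment_def)
  qed
  then show "integrable M (?F n m)" "(\<integral>\<omega>. ?F n m \<omega> \<partial>M) = circ_gauss_moment (2 * s\<^sup>2) n m"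
    by auto
qed

lemma prod_power_of_bool_eq:
  fixes f :: "'i \<Rightarrow> 'b::comm_monoid_mult"
  assumes "finite S" "p \<in> S"
  shows "(\<Prod>j\<in>S. f j ^ of_bool (j = p)) = f p"
proof -
  have "(\<Prod>j\<in>S. f j ^ of_bool (j = p)) = (\<Prod>j\<in>S. if j = p then f j else 1)"
    by (rule prod.cong) auto
  with assms show ?thesis
    by (simp add: prod.delta')
qed

lemma of_real_cmod_sum_sq:
  "complex_of_real ((cmod (\<Sum>m\<in>F. f m))\<^sup>2) = (\<Sum>m\<in>F. \<Sum>m'\<in>F. f m * cnj (f m'))"
  by (simp only: complex_norm_square cnj_sum sum_product)

lemma
  fixes Y :: "'i \<Rightarrow> 'a \<Rightarrow> complex"
  assumes F: "finite F" and int: "\<And>m m'. m \<in> F \<Longrightarrow> m' \<in> F \<Longrightarrow> integrable M (\<lambda>\<omega>. Y m \<omega> * cnj (Y m' \<omega>))"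
  shows integrable_cmod_sq_sum: "integrable M (\<lambda>\<omega>. (cmod (\<Sum>m\<in>F. Y m \<omega>))\<^sup>2)"
    and integral_cmod_sq_sum: "complex_of_real (\<integral>\<omega>. (cmod (\<Sum>m\<in>F. Y m \<omega>))\<^sup>2 \<partial>M)
      = (\<Sum>m\<in>F. \<Sum>m'\<in>F. \<integral>\<omega>. Y m \<omega> * cnj (Y m' \<omega>) \<partial>M)"
proof -
  have "integrable M (\<lambda>\<omega>. \<Sum>m\<in>F. \<Sum>m'\<in>F. Y m \<omega> * cnj (Y m' \<omega>))"
    using int by auto
  then show "integrable M (\<lambda>\<omega>. (cmod (\<Sum>m\<in>F. Y m \<omega>))\<^sup>2)"
    by (simp flip: complex_of_real_integrable_eq of_real_cmod_sum_sq)
  have "complex_of_real (\<integral>\<omega>. (cmod (\<Sum>m\<in>F. Y m \<omega>))\<^sup>2 \<partial>M)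
      = (\<integral>\<omega>. (\<Sum>m\<in>F. \<Sum>m'\<in>F. Y m \<omega> * cnj (Y m' \<omega>)) \<partial>M)"
    by (simp flip: integral_complex_of_real of_real_cmod_sum_sq)
  also have "\<dots> = (\<Sum>m\<in>F. \<Sum>m'\<in>F. \<integral>\<omega>. Y m \<omega> * cnj (Y m' \<omega>) \<partial>M)"
    using int by (simp add: integrable_sum)
  finally show "complex_of_real (\<integral>\<omega>. (cmod (\<Sum>m\<in>F. Y m \<omega>))\<^sup>2 \<partial>M)
      = (\<Sum>m\<in>F. \<Sum>m'\<in>F. \<integral>\<omega>. Y m \<omega> * cnj (Y m' \<omega>) \<partial>M)" .
qed

(* Only the mixed moments up to order (2, 2) of a circular Gaussian are assumed:
   they are all that second moments of quadratic forms involve. *)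
locale circ_gauss_family = prob_space +
  fixes X :: "'i \<Rightarrow> 'a \<Rightarrow> complex" and J :: "'i set" and v :: "'i \<Rightarrow> real"
  assumes indep: "indep_vars (\<lambda>_. borel) X J"
    and integrable_moment: "\<And>j n m. j \<in> J \<Longrightarrow> n \<le> 2 \<Longrightarrow> m \<le> 2 \<Longrightarrow>
      integrable M (\<lambda>\<omega>. X j \<omega> ^ n * cnj (X j \<omega>) ^ m)"
    and moment: "\<And>j n m. j \<in> J \<Longrightarrow> n \<le> 2 \<Longrightarrow> m \<le> 2 \<Longrightarrow>
      (\<integral>\<omega>. X j \<omega> ^ n * cnj (X j \<omega>) ^ m \<partial>M) = circ_gauss_moment (v j) n m"
begin

lemma
  assumes S: "finite S" "S \<subseteq> J" and nm: "\<And>j. j \<in> S \<Longrightarrow> n j \<le> 2 \<and> m j \<le> 2"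
  shows integrable_prod_moments: "integrable M (\<lambda>\<omega>. \<Prod>j\<in>S. X j \<omega> ^ n j * cnj (X j \<omega>) ^ m j)"
    and integral_prod_moments: "(\<integral>\<omega>. (\<Prod>j\<in>S. X j \<omega> ^ n j * cnj (X j \<omega>) ^ m j) \<partial>M)
          = (\<Prod>j\<in>S. circ_gauss_moment (v j) (n j) (m j))"
proof -
  have [measurable]: "cnj \<in> borel_measurable borel"
    by (intro borel_measurable_continuous_onI continuous_intros)
  have ind: "indep_vars (\<lambda>_. borel) (\<lambda>j \<omega>. X j \<omega> ^ n j * cnj (X j \<omega>) ^ m j) S"
    by (rule indep_vars_compose2[OF indep_vars_subset[OF indep S(2)]]) measurable
  have int: "\<And>j. j \<in> S \<Longrightarrow> integrable M (\<lambda>\<omega>. X j \<omega> ^ n j * cnj (X j \<omega>) ^ m j)"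
    using integrable_moment nm S(2) by blast
  show "integrable M (\<lambda>\<omega>. \<Prod>j\<in>S. X j \<omega> ^ n j * cnj (X j \<omega>) ^ m j)"
    by (rule indep_vars_integrable[OF S(1) ind int])
  show "(\<integral>\<omega>. (\<Prod>j\<in>S. X j \<omega> ^ n j * cnj (X j \<omega>) ^ m j) \<partial>M)
          = (\<Prod>j\<in>S. circ_gauss_moment (v j) (n j) (m j))"
    using indep_vars_lebesgue_integral[OF S(1) ind int] moment nm S(2)
    by (simp add: subset_iff)
qed

lemma
  assumes "a \<in> J" "b \<in> J"
  shows integrable_cnj_mult: "integrable M (\<lambda>\<omega>. cnj (X a \<omega>) * X b \<omega>)"
    and integral_cnj_mult:
      "(\<integral>\<omega>. cnj (X a \<omega>) * X b \<omega> \<partial>M) = (if a = b then complex_of_real (v a) else 0)"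
proof -
  let ?S = "{a, b}" and ?n = "\<lambda>j. of_bool (j = b) :: nat" and ?m = "\<lambda>j. of_bool (j = a) :: nat"
  have monomial: "cnj (X a \<omega>) * X b \<omega> = (\<Prod>j\<in>?S. X j \<omega> ^ ?n j * cnj (X j \<omega>) ^ ?m j)" for \<omega>
    by (simp add: prod.distrib prod_power_of_bool_eq)
  have S: "finite ?S" "?S \<subseteq> J" and nm: "\<And>j. j \<in> ?S \<Longrightarrow> ?n j \<le> 2 \<and> ?m j \<le> 2"
    using assms by auto
  show "integrable M (\<lambda>\<omega>. cnj (X a \<omega>) * X b \<omega>)"
    unfolding monomial by (rule integrable_prod_moments[OF S nm])
  have "(\<integral>\<omega>. cnj (X a \<omega>) * X b \<omega> \<partial>M) = (\<Prod>j\<in>?S. circ_gauss_moment (v j) (?n j) (?m j))"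
    unfolding monomial by (rule integral_prod_moments[OF S nm])
  also have "\<dots> = (if a = b then complex_of_real (v a) else 0)"
    by (cases "a = b") (simp_all add: circ_gauss_moment_def)
  finally show "(\<integral>\<omega>. cnj (X a \<omega>) * X b \<omega> \<partial>M) = (if a = b then complex_of_real (v a) else 0)" .
qed

text \<open>Isserlis' (Wick's) theorem for circular Gaussians: the pseudo-covariances
  vanish, so only the two pairings of each X with a conjugate contribute.\<close>
lemma
  assumes "p \<in> J" "q \<in> J" "r \<in> J" "s \<in> J"
  shows integrable_fourth_product:
      "integrable M (\<lambda>\<omega>. X p \<omega> * cnj (X q \<omega>) * X r \<omega> * cnj (X s \<omega>))"
    and integral_fourth_product: "(\<integral>\<omega>. X p \<omega> * cnj (X q \<omega>) * X r \<omega> * cnj (X s \<omega>) \<partial>M)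
      = v p * v r * (of_bool (p = q \<and> r = s) + of_bool (p = s \<and> q = r))"
proof -
  let ?S = "{p, q, r, s}"
    and ?n = "\<lambda>j. of_bool (j = p) + of_bool (j = r) :: nat"
    and ?m = "\<lambda>j. of_bool (j = q) + of_bool (j = s) :: nat"
  have monomial: "X p \<omega> * cnj (X q \<omega>) * X r \<omega> * cnj (X s \<omega>)
      = (\<Prod>j\<in>?S. X j \<omega> ^ ?n j * cnj (X j \<omega>) ^ ?m j)" for \<omega>
    by (simp only: power_add prod.distrib prod_power_of_bool_eq finite.intros insertI1 insertI2)
      (simp add: ac_simps)
  have S: "finite ?S" "?S \<subseteq> J" and nm: "\<And>j. j \<in> ?S \<Longrightarrow> ?n j \<le> 2 \<and> ?m j \<le> 2"
    using assms by auto
  show "integrable M (\<lambda>\<omega>. X p \<omega> * cnj (X q \<omega>) * X r \<omega> * cnj (X s \<omega>))"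
    unfolding monomial by (rule integrable_prod_moments[OF S nm])
  have "(\<integral>\<omega>. X p \<omega> * cnj (X q \<omega>) * X r \<omega> * cnj (X s \<omega>) \<partial>M)
      = (\<Prod>j\<in>?S. circ_gauss_moment (v j) (?n j) (?m j))"
    unfolding monomial by (rule integral_prod_moments[OF S nm])
  also have "\<dots> = v p * v r * (of_bool (p = q \<and> r = s) + of_bool (p = s \<and> q = r))"
    by (cases "p = q"; cases "p = r"; cases "p = s"; cases "q = r"; cases "q = s"; cases "r = s")
      (simp_all add: circ_gauss_moment_def prod.insert_if power2_eq_square)
  finally show "(\<integral>\<omega>. X p \<omega> * cnj (X q \<omega>) * X r \<omega> * cnj (X s \<omega>) \<partial>M)
      = v p * v r * (of_bool (p = q \<and> r = s) + of_bool (p = s \<and> q = r))" .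
qed

lemma
  assumes F: "finite F" and b: "\<And>m. m \<in> F \<Longrightarrow> b m \<in> J" and inj: "inj_on b F"
  shows integrable_cmod_sq_lincomb: "integrable M (\<lambda>\<omega>. (cmod (\<Sum>m\<in>F. c m * X (b m) \<omega>))\<^sup>2)"
    and integral_cmod_sq_lincomb:
      "(\<integral>\<omega>. (cmod (\<Sum>m\<in>F. c m * X (b m) \<omega>))\<^sup>2 \<partial>M) = (\<Sum>m\<in>F. (cmod (c m))\<^sup>2 * v (b m))"
proof -
  have product: "c m * X (b m) \<omega> * cnj (c m' * X (b m') \<omega>)
      = (c m * cnj (c m')) * (cnj (X (b m') \<omega>) * X (b m) \<omega>)" for m m' \<omega>
    by simp
  have int: "integrable M (\<lambda>\<omega>. c m * X (b m) \<omega> * cnj (c m' * X (b m') \<omega>))"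
    if "m \<in> F" "m' \<in> F" for m m'
    unfolding product using b that by (intro integrable_mult_right integrable_cnj_mult) auto
  show "integrable M (\<lambda>\<omega>. (cmod (\<Sum>m\<in>F. c m * X (b m) \<omega>))\<^sup>2)"
    by (rule integrable_cmod_sq_sum[OF F int])
  have "complex_of_real (\<integral>\<omega>. (cmod (\<Sum>m\<in>F. c m * X (b m) \<omega>))\<^sup>2 \<partial>M)
      = (\<Sum>m\<in>F. \<Sum>m'\<in>F. \<integral>\<omega>. c m * X (b m) \<omega> * cnj (c m' * X (b m') \<omega>) \<partial>M)"
    by (rule integral_cmod_sq_sum[OF F int])
  also have "\<dots> = (\<Sum>m\<in>F. \<Sum>m'\<in>F. (c m * cnj (c m')) * (\<integral>\<omega>. cnj (X (b m') \<omega>) * X (b m) \<omega> \<partial>M))"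
    unfolding product by simp
  also have "\<dots> = (\<Sum>m\<in>F. \<Sum>m'\<in>F. if m' = m then c m * cnj (c m) * v (b m) else 0)"
    using b inj by (intro sum.cong refl) (auto simp: integral_cnj_mult inj_on_eq_iff)
  also have "\<dots> = complex_of_real (\<Sum>m\<in>F. (cmod (c m))\<^sup>2 * v (b m))"
    using F by (simp add: complex_norm_square[symmetric] mult_ac)
  finally show "(\<integral>\<omega>. (cmod (\<Sum>m\<in>F. c m * X (b m) \<omega>))\<^sup>2 \<partial>M) = (\<Sum>m\<in>F. (cmod (c m))\<^sup>2 * v (b m))"
    by (simp only: of_real_eq_iff)
qed

lemma integral_sum_cnj_mult:
  assumes "\<And>m. m \<in> F \<Longrightarrow> a m \<in> J \<and> b m \<in> J"
  shows "(\<integral>\<omega>. (\<Sum>m\<in>F. c m * (cnj (X (a m) \<omega>) * X (b m) \<omega>)) \<partial>M)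
       = (\<Sum>m\<in>F. if a m = b m then c m * v (a m) else 0)"
  using assms by (auto simp: integrable_cnj_mult integral_cnj_mult intro!: sum.cong)

lemma
  assumes "a \<in> J" "b \<in> J" "a' \<in> J" "b' \<in> J"
  shows integrable_cnj_mult_cnj:
      "integrable M (\<lambda>\<omega>. cnj (X a \<omega>) * X b \<omega> * cnj (cnj (X a' \<omega>) * X b' \<omega>))"
    and integral_cnj_mult_cnj: "(\<integral>\<omega>. cnj (X a \<omega>) * X b \<omega> * cnj (cnj (X a' \<omega>) * X b' \<omega>) \<partial>M)
      = of_bool (a = b) * v a * (of_bool (a' = b') * v a') + of_bool (a = a' \<and> b = b') * v a * v b"
proof -
  have product: "cnj (X a \<omega>) * X b \<omega> * cnj (cnj (X a' \<omega>) * X b' \<omega>)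
      = X b \<omega> * cnj (X a \<omega>) * X a' \<omega> * cnj (X b' \<omega>)" for \<omega>
    by simp
  show "integrable M (\<lambda>\<omega>. cnj (X a \<omega>) * X b \<omega> * cnj (cnj (X a' \<omega>) * X b' \<omega>))"
    unfolding product by (rule integrable_fourth_product[OF assms(2,1,3,4)])
  show "(\<integral>\<omega>. cnj (X a \<omega>) * X b \<omega> * cnj (cnj (X a' \<omega>) * X b' \<omega>) \<partial>M)
      = of_bool (a = b) * v a * (of_bool (a' = b') * v a') + of_bool (a = a' \<and> b = b') * v a * v b"
    unfolding product integral_fourth_product[OF assms(2,1,3,4)]
    by (cases "a = b"; cases "a = a'"; cases "b = b'") (auto simp: mult_ac)
qed

lemma integral_cmod_sq_bilinear:
  assumes F: "finite F" and ab: "\<And>m. m \<in> F \<Longrightarrow> a m \<in> J \<and> b m \<in> J"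
    and inj: "\<And>m m'. m \<in> F \<Longrightarrow> m' \<in> F \<Longrightarrow> a m = a m' \<Longrightarrow> b m = b m' \<Longrightarrow> m = m'"
  shows "(\<integral>\<omega>. (cmod (\<Sum>m\<in>F. c m * (cnj (X (a m) \<omega>) * X (b m) \<omega>)))\<^sup>2 \<partial>M)
       = (cmod (\<Sum>m\<in>F. if a m = b m then c m * v (a m) else 0))\<^sup>2
         + (\<Sum>m\<in>F. (cmod (c m))\<^sup>2 * v (a m) * v (b m))"
proof -
  let ?Y = "\<lambda>m \<omega>. cnj (X (a m) \<omega>) * X (b m) \<omega>"
  let ?mean = "\<lambda>m. if a m = b m then c m * v (a m) else 0"
  have product:
    "c m * ?Y m \<omega> * cnj (c m' * ?Y m' \<omega>) = (c m * cnj (c m')) * (?Y m \<omega> * cnj (?Y m' \<omega>))"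
    for m m' \<omega>
    by simp
  have int: "integrable M (\<lambda>\<omega>. c m * ?Y m \<omega> * cnj (c m' * ?Y m' \<omega>))" if "m \<in> F" "m' \<in> F" for m m'
    unfolding product using ab that by (intro integrable_mult_right integrable_cnj_mult_cnj) auto
  have "complex_of_real (\<integral>\<omega>. (cmod (\<Sum>m\<in>F. c m * ?Y m \<omega>))\<^sup>2 \<partial>M)
      = (\<Sum>m\<in>F. \<Sum>m'\<in>F. \<integral>\<omega>. c m * ?Y m \<omega> * cnj (c m' * ?Y m' \<omega>) \<partial>M)"
    by (rule integral_cmod_sq_sum[OF F int])
  also have "\<dots> = (\<Sum>m\<in>F. \<Sum>m'\<in>F. ?mean m * cnj (?mean m')
      + (if m' = m then c m * cnj (c m) * (v (a m) * v (b m)) else 0))"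
  proof (intro sum.cong refl)
    fix m m' assume m: "m \<in> F" "m' \<in> F"
    then have J: "a m \<in> J" "b m \<in> J" "a m' \<in> J" "b m' \<in> J"
      using ab by auto
    from m have "(a m = a m' \<and> b m = b m') \<longleftrightarrow> m' = m"
      using inj by blast
    then show "(\<integral>\<omega>. c m * ?Y m \<omega> * cnj (c m' * ?Y m' \<omega>) \<partial>M)
      = ?mean m * cnj (?mean m') + (if m' = m then c m * cnj (c m) * (v (a m) * v (b m)) else 0)"
      unfolding product integral_mult_right_zero integral_cnj_mult_cnj[OF J]
      by (simp add: algebra_simps)
  qed
  also have "\<dots> = sum ?mean F * cnj (sum ?mean F)
      + (\<Sum>m\<in>F. \<Sum>m'\<in>F. if m' = m then c m * cnj (c m) * (v (a m) * v (b m)) else 0)"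
    by (simp only: cnj_sum sum_product sum.distrib)
  also have "\<dots> = sum ?mean F * cnj (sum ?mean F)
      + complex_of_real (\<Sum>m\<in>F. (cmod (c m))\<^sup>2 * v (a m) * v (b m))"
    using F by (simp add: complex_norm_square[symmetric] mult_ac)
  also have "\<dots>
      = complex_of_real ((cmod (sum ?mean F))\<^sup>2 + (\<Sum>m\<in>F. (cmod (c m))\<^sup>2 * v (a m) * v (b m)))"
    by (simp only: of_real_add complex_norm_square)
  finally show ?thesis
    by (simp only: of_real_eq_iff)
qed

end

lemma (in prob_space) indep_vars_indep_var:
  assumes X: "indep_vars (\<lambda>_. N) X I" and "a \<in> I" "b \<in> I" "a \<noteq> b"
  shows "indep_var N (X a) N (X b)"
proof -
  have "indep_var (PiM {a} (\<lambda>_. N)) (\<lambda>\<omega>. restrict (\<lambda>i. X i \<omega>) {a})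
      (PiM {b} (\<lambda>_. N)) (\<lambda>\<omega>. restrict (\<lambda>i. X i \<omega>) {b})"
    using assms by (intro indep_var_restrict[OF X]) auto
  then have "indep_var N ((\<lambda>f. f a) \<circ> (\<lambda>\<omega>. restrict (\<lambda>i. X i \<omega>) {a}))
      N ((\<lambda>f. f b) \<circ> (\<lambda>\<omega>. restrict (\<lambda>i. X i \<omega>) {b}))"
    by (rule indep_var_compose) (simp_all add: measurable_component_singleton)
  then show ?thesis
    by (simp add: comp_def)
qed

definition channel_noise_entry ::
  "(nat \<Rightarrow> 'a \<Rightarrow> nat \<Rightarrow> complex) \<Rightarrow> (nat \<Rightarrow> 'a \<Rightarrow> nat \<Rightarrow> complex) \<Rightarrow> nat \<times> nat \<times> nat \<Rightarrow> 'a \<Rightarrow> complex"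
  where "channel_noise_entry h z = (\<lambda>(t, k, i) \<omega>. if t = 0 then h k \<omega> i else z k \<omega> i)"

definition entry_index :: "nat \<Rightarrow> nat \<Rightarrow> (nat \<times> nat \<times> nat) set" where
  "entry_index K M = {0, 1} \<times> {1..K} \<times> {..<M}"

definition entry_var :: "(nat \<Rightarrow> real) \<Rightarrow> real \<Rightarrow> nat \<times> nat \<times> nat \<Rightarrow> real" where
  "entry_var beta sigma2 = (\<lambda>(t, k, i). if t = 0 then beta k else sigma2)"

(* gauss_coords numbers the real coordinates Re h, Im h, Re z, Im z by c = 0, 1, 2, 3,
   so the complex entry with t = 0 (channel) or t = 1 (noise) occupies c = 2t and c = 2t + 1. *)
definition coord_pair :: "nat \<times> nat \<times> nat \<Rightarrow> (nat \<times> nat \<times> nat) set" where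
  "coord_pair = (\<lambda>(t, k, i). {(2 * t, k, i), (2 * t + 1, k, i)})"

definition complex_of_coord_pair :: "nat \<times> nat \<times> nat \<Rightarrow> (nat \<times> nat \<times> nat \<Rightarrow> real) \<Rightarrow> complex" where
  "complex_of_coord_pair = (\<lambda>(t, k, i) f. Complex (f (2 * t, k, i)) (f (2 * t + 1, k, i)))"

lemma channel_noise_entry_eq_Complex:
  assumes "(t, k, i) \<in> entry_index K M"
  shows "channel_noise_entry h z (t, k, i)
    = (\<lambda>\<omega>. Complex (gauss_coords h z (2 * t, k, i) \<omega>) (gauss_coords h z (2 * t + 1, k, i) \<omega>))"
  using assms by (auto simp: fun_eq_iff channel_noise_entry_def entry_index_def gauss_coords_def)

lemma indep_vars_channel_noise_entry:
  assumes P: "prob_space P"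
    and ind: "prob_space.indep_vars P (\<lambda>_. borel) (gauss_coords h z) (coord_index K M)"
  shows "prob_space.indep_vars P (\<lambda>_. borel) (channel_noise_entry h z) (entry_index K M)"
proof -
  interpret prob_space P
    by (rule P)
  let ?G = "\<lambda>j \<omega>. restrict (\<lambda>c. gauss_coords h z c \<omega>) (coord_pair j)"
  have "coord_pair j \<subseteq> coord_index K M" if "j \<in> entry_index K M" for j
    using that by (auto simp: coord_pair_def entry_index_def coord_index_def)
  moreover have "disjoint_family_on coord_pair (entry_index K M)"
    by (auto simp: disjoint_family_on_def coord_pair_def entry_index_def)
  ultimately have "indep_vars (\<lambda>j. PiM (coord_pair j) (\<lambda>_. borel)) ?G (entry_index K M)"
    by (rule indep_vars_restrict[OF ind])
  moreover have "complex_of_coord_pair j \<in> measurable (PiM (coord_pair j) (\<lambda>_. borel)) borel" for j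
  proof -
    obtain t k i where j: "j = (t, k, i)"
      by (cases j) auto
    have "complex_of_coord_pair j
        = (\<lambda>f. complex_of_real (f (2 * t, k, i)) + \<i> * complex_of_real (f (2 * t + 1, k, i)))"
      by (simp add: fun_eq_iff j complex_of_coord_pair_def complex_eq_iff)
    moreover have "(2 * t, k, i) \<in> coord_pair j" "(2 * t + 1, k, i) \<in> coord_pair j"
      by (auto simp: j coord_pair_def)
    ultimately show ?thesis
      by simp
  qed
  ultimately have
    "indep_vars (\<lambda>_. borel) (\<lambda>j \<omega>. complex_of_coord_pair j (?G j \<omega>)) (entry_index K M)"
    by (rule indep_vars_compose2)
  moreover have "complex_of_coord_pair j (?G j \<omega>) = channel_noise_entry h z j \<omega>"
    if "j \<in> entry_index K M" for j \<omega>
    using that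
    by (auto simp: channel_noise_entry_eq_Complex complex_of_coord_pair_def coord_pair_def
        entry_index_def)
  ultimately show ?thesis
    by (simp cong: indep_vars_cong)
qed

lemma circ_gauss_family_channel_noise_entry:
  assumes P: "prob_space P" and sigma2: "sigma2 > 0" and beta: "\<forall>k\<in>{1..K}. beta k > 0"
    and D: "\<forall>k\<in>{1..K}. \<forall>i<M.
           distributed P lborel (\<lambda>\<omega>. Re (h k \<omega> i)) (normal_density 0 (sqrt (beta k / 2))) \<and>
           distributed P lborel (\<lambda>\<omega>. Im (h k \<omega> i)) (normal_density 0 (sqrt (beta k / 2))) \<and>
           distributed P lborel (\<lambda>\<omega>. Re (z k \<omega> i)) (normal_density 0 (sqrt (sigma2 / 2))) \<and>
           distributed P lborel (\<lambda>\<omega>. Im (z k \<omega> i)) (normal_density 0 (sqrt (sigma2 / 2)))"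
    and ind: "prob_space.indep_vars P (\<lambda>_. borel) (gauss_coords h z) (coord_index K M)"
  shows "circ_gauss_family P (channel_noise_entry h z) (entry_index K M) (entry_var beta sigma2)"
proof -
  interpret prob_space P
    by (rule P)
  let ?X = "channel_noise_entry h z"
  have moments: "integrable P (\<lambda>\<omega>. ?X j \<omega> ^ n * cnj (?X j \<omega>) ^ m)
    \<and> (\<integral>\<omega>. ?X j \<omega> ^ n * cnj (?X j \<omega>) ^ m \<partial>P) = circ_gauss_moment (entry_var beta sigma2 j) n m"
    if j: "j \<in> entry_index K M" and nm: "n \<le> 2" "m \<le> 2" for j n m
  proof -
    obtain t k i where tki: "j = (t, k, i)" "t \<in> {0, 1}" "k \<in> {1..K}" "i < M"
      using j by (auto simp: entry_index_def)
    define s where "s = sqrt (entry_var beta sigma2 j / 2)"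
    have "entry_var beta sigma2 j > 0"
      using beta sigma2 tki by (auto simp: entry_var_def)
    then have s: "s > 0" and var: "entry_var beta sigma2 j = 2 * s\<^sup>2"
      by (simp_all add: s_def)
    let ?R = "gauss_coords h z (2 * t, k, i)" and ?I = "gauss_coords h z (2 * t + 1, k, i)"
    have "indep_var borel ?R borel ?I"
      using tki by (intro indep_vars_indep_var[OF ind]) (auto simp: coord_index_def)
    moreover have "distributed P lborel ?R (normal_density 0 s)"
      and "distributed P lborel ?I (normal_density 0 s)"
      using D tki by (auto simp: s_def entry_var_def gauss_coords_def)
    ultimately show ?thesis
      using complex_normal_moments[OF s] nm j var
      by (simp add: tki(1) channel_noise_entry_eq_Complex)
  qed
  show ?thesis
    using moments indep_vars_channel_noise_entry[OF P ind]
    by unfold_locales blast+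
qed

locale mrt_swipt =
  circ_gauss_family P "channel_noise_entry h z" "entry_index K M" "entry_var beta sigma2"
  for P :: "'a measure" and h z :: "nat \<Rightarrow> 'a \<Rightarrow> nat \<Rightarrow> complex" and K M :: nat
    and beta :: "nat \<Rightarrow> real" and sigma2 :: real +
  fixes Phi :: complex and rho :: real and d :: "nat \<Rightarrow> complex" and pp :: "nat \<Rightarrow> real"
  assumes M_pos: "M > 0" and K_pos: "K > 0" and Phi_nonzero: "Phi \<noteq> 0" and rho_pos: "rho > 0"
    and sigma2_pos: "sigma2 > 0" and d_unimodular: "\<forall>i<M. cmod (d i) = 1"
    and beta_pp_pos: "\<forall>k\<in>{1..K}. beta k > 0 \<and> pp k > 0"
begin

abbreviation X :: "nat \<times> nat \<times> nat \<Rightarrow> 'a \<Rightarrow> complex" where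
  "X \<equiv> channel_noise_entry h z"

definition pilot_power :: "nat \<Rightarrow> real" where
  "pilot_power k = rho * beta k * real K * pp k * (cmod Phi)\<^sup>2"

definition chan_gain :: "nat \<Rightarrow> real" where
  "chan_gain k = pilot_power k / (pilot_power k + sigma2)"

definition noise_gain :: "nat \<Rightarrow> complex" where
  "noise_gain k
    = complex_of_real (sqrt (rho * real K * pp k) * beta k / (pilot_power k + sigma2)) * cnj Phi"

definition est_coef :: "nat \<Rightarrow> nat \<Rightarrow> nat \<Rightarrow> complex" where
  "est_coef k i t = (if t = 0 then complex_of_real (chan_gain k) else noise_gain k * cnj (d i))"

definition err :: "nat \<Rightarrow> real" where
  "err k = est_err rho (real K) (pp k) (beta k) Phi sigma2"

definition hhat :: "nat \<Rightarrow> 'a \<Rightarrow> nat \<Rightarrow> complex" where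
  "hhat k \<omega> = chan_est rho (real K) (pp k) (beta k) Phi sigma2 d (h k \<omega>) (z k \<omega>)"

definition w :: "nat \<Rightarrow> 'a \<Rightarrow> nat \<Rightarrow> complex" where
  "w = mrt_precoder P M hhat"

definition mrt_norm :: "nat \<Rightarrow> real" where
  "mrt_norm k = sqrt (real M * (beta k - err k))"

lemma pilot_power_pos: "k \<in> {1..K} \<Longrightarrow> pilot_power k > 0"
  using beta_pp_pos rho_pos Phi_nonzero K_pos by (auto simp: pilot_power_def)

lemma beta_minus_err_eq: "k \<in> {1..K} \<Longrightarrow> beta k - err k = chan_gain k * beta k"
  using pilot_power_pos[of k] sigma2_pos
  by (simp add: err_def est_err_def chan_gain_def pilot_power_def field_simps)

lemma beta_minus_err_pos: "k \<in> {1..K} \<Longrightarrow> beta k - err k > 0"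
  using pilot_power_pos[of k] sigma2_pos beta_pp_pos by (simp add: beta_minus_err_eq chan_gain_def)

lemma mrt_norm_pos: "k \<in> {1..K} \<Longrightarrow> mrt_norm k > 0"
  using beta_minus_err_pos M_pos by (simp add: mrt_norm_def)

lemma mrt_norm_sq: "k \<in> {1..K} \<Longrightarrow> (mrt_norm k)\<^sup>2 = real M * (beta k - err k)"
  using beta_minus_err_pos[of k] by (simp add: mrt_norm_def)

lemma noise_gain_norm_sq:
  assumes k: "k \<in> {1..K}"
  shows "(cmod (noise_gain k))\<^sup>2 = beta k * pilot_power k / (pilot_power k + sigma2)\<^sup>2"
proof -
  have beta: "beta k > 0" and pp: "pp k > 0"
    using beta_pp_pos k by auto
  have "cmod (noise_gain k)
      = sqrt (rho * real K * pp k) * beta k / (pilot_power k + sigma2) * cmod Phi"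
    using rho_pos beta pp pilot_power_pos[OF k] sigma2_pos
    unfolding noise_gain_def norm_mult norm_of_real complex_mod_cnj by simp
  then have "(cmod (noise_gain k))\<^sup>2
      = rho * real K * pp k * (beta k)\<^sup>2 * (cmod Phi)\<^sup>2 / (pilot_power k + sigma2)\<^sup>2"
    using rho_pos pp by (simp add: power_mult_distrib power_divide)
  also have "\<dots> = beta k * pilot_power k / (pilot_power k + sigma2)\<^sup>2"
    by (simp add: pilot_power_def power2_eq_square mult_ac)
  finally show ?thesis .
qed

lemma chan_est_variance:
  assumes k: "k \<in> {1..K}" and i: "i < M"
  shows "(\<Sum>t\<in>{0, 1}. (cmod (est_coef k i t))\<^sup>2 * entry_var beta sigma2 (t, k, i)) = beta k - err k"
proof -
  let ?c = "pilot_power k"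
  have "(\<Sum>t\<in>{0, 1}. (cmod (est_coef k i t))\<^sup>2 * entry_var beta sigma2 (t, k, i))
      = (chan_gain k)\<^sup>2 * beta k + (cmod (noise_gain k))\<^sup>2 * sigma2"
    using d_unimodular i by (simp add: est_coef_def entry_var_def norm_mult)
  also have "\<dots> = beta k - err k"
  proof -
    have "(x / q)\<^sup>2 * b + b * x / q\<^sup>2 * (q - x) = x / q * b" if "q \<noteq> 0" for x q b :: real
      using that by (simp add: field_simps power2_eq_square)
    from this[of "?c + sigma2" ?c "beta k"] pilot_power_pos[OF k] sigma2_pos show ?thesis
      unfolding noise_gain_norm_sq[OF k] beta_minus_err_eq[OF k] chan_gain_def by simp
  qed
  finally show ?thesis .
qed

lemma hhat_eq_entries:
  "hhat k \<omega> i = (\<Sum>t\<in>{0, 1}. est_coef k i t * X (t, k, i) \<omega>)"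
  by (simp add: hhat_def chan_est_def est_coef_def chan_gain_def noise_gain_def pilot_power_def
      channel_noise_entry_def mult_ac)

lemma
  assumes k: "k \<in> {1..K}" and i: "i < M"
  shows integrable_cmod_sq_hhat: "integrable P (\<lambda>\<omega>. (cmod (hhat k \<omega> i))\<^sup>2)"
    and integral_cmod_sq_hhat: "(\<integral>\<omega>. (cmod (hhat k \<omega> i))\<^sup>2 \<partial>P) = beta k - err k"
proof -
  have entries: "\<And>t. t \<in> {0, 1} \<Longrightarrow> (t, k, i) \<in> entry_index K M"
    and inj: "inj_on (\<lambda>t. (t, k, i)) {0, 1}"
    using k i by (auto simp: entry_index_def inj_on_def)
  show "integrable P (\<lambda>\<omega>. (cmod (hhat k \<omega> i))\<^sup>2)"
    unfolding hhat_eq_entries by (rule integrable_cmod_sq_lincomb[OF _ entries inj]) simp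
  have "(\<integral>\<omega>. (cmod (hhat k \<omega> i))\<^sup>2 \<partial>P)
      = (\<Sum>t\<in>{0, 1}. (cmod (est_coef k i t))\<^sup>2 * entry_var beta sigma2 (t, k, i))"
    unfolding hhat_eq_entries by (rule integral_cmod_sq_lincomb[OF _ entries inj]) simp
  also have "\<dots> = beta k - err k"
    by (rule chan_est_variance[OF k i])
  finally show "(\<integral>\<omega>. (cmod (hhat k \<omega> i))\<^sup>2 \<partial>P) = beta k - err k" .
qed

lemma w_eq_hhat_div_mrt_norm: "k \<in> {1..K} \<Longrightarrow> w k \<omega> i = hhat k \<omega> i / complex_of_real (mrt_norm k)"
proof -
  assume k: "k \<in> {1..K}"
  have "(\<integral>\<omega>. (\<Sum>j<M. (cmod (hhat k \<omega> j))\<^sup>2) \<partial>P) = (\<Sum>j<M. \<integral>\<omega>. (cmod (hhat k \<omega> j))\<^sup>2 \<partial>P)"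
    using integrable_cmod_sq_hhat[OF k] by (simp add: integral_sum)
  also have "\<dots> = real M * (beta k - err k)"
    using integral_cmod_sq_hhat[OF k] by simp
  finally show ?thesis
    by (simp add: w_def mrt_precoder_def mrt_norm_def)
qed

abbreviation amplitude_terms :: "(nat \<times> nat \<times> nat) set" where
  "amplitude_terms \<equiv> {..<M} \<times> {1..K} \<times> {0, 1}"

definition amplitude_coef :: "(nat \<Rightarrow> real) \<Rightarrow> nat \<times> nat \<times> nat \<Rightarrow> complex" where
  "amplitude_coef s = (\<lambda>(i, k', t). complex_of_real (s k' / mrt_norm k') * est_coef k' i t)"

definition rx_entry :: "nat \<Rightarrow> nat \<times> nat \<times> nat \<Rightarrow> nat \<times> nat \<times> nat" where
  "rx_entry k = (\<lambda>(i, k', t). (0, k, i))"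

definition tx_entry :: "nat \<times> nat \<times> nat \<Rightarrow> nat \<times> nat \<times> nat" where
  "tx_entry = (\<lambda>(i, k', t). (t, k', i))"

lemma sum_amplitude_terms:
  "(\<Sum>m\<in>amplitude_terms. f m) = (\<Sum>i<M. \<Sum>k'\<in>{1..K}. f (i, k', 0) + f (i, k', 1))"
  by (simp add: sum.cartesian_product')

lemma rx_tx_entries:
  "k \<in> {1..K} \<Longrightarrow> m \<in> amplitude_terms \<Longrightarrow>
    rx_entry k m \<in> entry_index K M \<and> tx_entry m \<in> entry_index K M"
  by (auto simp: rx_entry_def tx_entry_def entry_index_def)

lemma cinner_precoded_eq:
  assumes k: "k \<in> {1..K}"
  shows "cinner M (h k \<omega>) (\<lambda>i. \<Sum>k'=1..K. complex_of_real (s k') * w k' \<omega> i)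
    = (\<Sum>m\<in>amplitude_terms.
         amplitude_coef s m * (cnj (X (rx_entry k m) \<omega>) * X (tx_entry m) \<omega>))"
proof -
  let ?term = "\<lambda>m. amplitude_coef s m * (cnj (X (rx_entry k m) \<omega>) * X (tx_entry m) \<omega>)"
  have "cinner M (h k \<omega>) (\<lambda>i. \<Sum>k'=1..K. complex_of_real (s k') * w k' \<omega> i)
      = (\<Sum>i<M. \<Sum>k'\<in>{1..K}. cnj (h k \<omega> i) * (complex_of_real (s k') * w k' \<omega> i))"
    by (simp add: cinner_def sum_distrib_left)
  also have "\<dots> = (\<Sum>m\<in>amplitude_terms. ?term m)"
    unfolding sum_amplitude_terms
  proof (intro sum.cong refl)
    fix i k' assume "i \<in> {..<M}" "k' \<in> {1..K}"
    with mrt_norm_pos[of k']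
    show "cnj (h k \<omega> i) * (complex_of_real (s k') * w k' \<omega> i) = ?term (i, k', 0) + ?term (i, k', 1)"
      by (simp add: w_eq_hhat_div_mrt_norm hhat_eq_entries amplitude_coef_def rx_entry_def
          tx_entry_def channel_noise_entry_def field_simps)
  qed
  finally show ?thesis .
qed

lemma amplitude_mean:
  assumes k: "k \<in> {1..K}"
  shows "(\<Sum>m\<in>amplitude_terms.
      if rx_entry k m = tx_entry m
      then amplitude_coef s m * entry_var beta sigma2 (rx_entry k m) else 0)
    = complex_of_real (s k * mrt_norm k)"
proof -
  have "(\<Sum>m\<in>amplitude_terms.
      if rx_entry k m = tx_entry m
      then amplitude_coef s m * entry_var beta sigma2 (rx_entry k m) else 0)
    = (\<Sum>i<M. \<Sum>k'\<in>{1..K}.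
        if k' = k then complex_of_real (s k / mrt_norm k * chan_gain k * beta k) else 0)"
    unfolding sum_amplitude_terms
    by (intro sum.cong refl)
      (auto simp: rx_entry_def tx_entry_def amplitude_coef_def est_coef_def entry_var_def)
  also have "\<dots> = complex_of_real (real M * chan_gain k * beta k * s k / mrt_norm k)"
    using k by (simp add: sum.delta')
  also have "real M * chan_gain k * beta k = (mrt_norm k)\<^sup>2"
    by (simp add: mrt_norm_sq[OF k] beta_minus_err_eq[OF k])
  finally show ?thesis
    using mrt_norm_pos[OF k] by (simp add: power2_eq_square)
qed

lemma amplitude_spread:
  assumes k: "k \<in> {1..K}"
  shows "(\<Sum>m\<in>amplitude_terms. (cmod (amplitude_coef s m))\<^sup>2
      * entry_var beta sigma2 (rx_entry k m) * entry_var beta sigma2 (tx_entry m))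
    = beta k * (\<Sum>k'=1..K. (s k')\<^sup>2)"
proof -
  have "(\<Sum>m\<in>amplitude_terms. (cmod (amplitude_coef s m))\<^sup>2
      * entry_var beta sigma2 (rx_entry k m) * entry_var beta sigma2 (tx_entry m))
    = (\<Sum>i<M. \<Sum>k'\<in>{1..K}. beta k * (s k')\<^sup>2 / (mrt_norm k')\<^sup>2 *
        (\<Sum>t\<in>{0, 1}. (cmod (est_coef k' i t))\<^sup>2 * entry_var beta sigma2 (t, k', i)))"
    unfolding sum_amplitude_terms
    by (intro sum.cong refl)
      (simp add: rx_entry_def tx_entry_def amplitude_coef_def entry_var_def
        norm_mult norm_divide power_mult_distrib power_divide algebra_simps)
  also have "\<dots> = (\<Sum>i<M. \<Sum>k'\<in>{1..K}. beta k * (s k')\<^sup>2 / real M)"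
  proof (intro sum.cong refl)
    fix i k' assume "i \<in> {..<M}" "k' \<in> {1..K}"
    with beta_minus_err_pos[of k'] show "beta k * (s k')\<^sup>2 / (mrt_norm k')\<^sup>2 *
        (\<Sum>t\<in>{0, 1}. (cmod (est_coef k' i t))\<^sup>2 * entry_var beta sigma2 (t, k', i))
      = beta k * (s k')\<^sup>2 / real M"
      by (simp only: chan_est_variance mrt_norm_sq lessThan_iff) simp
  qed
  also have "\<dots> = beta k * (\<Sum>k'=1..K. (s k')\<^sup>2)"
    using M_pos by (simp add: sum_distrib_left)
  finally show ?thesis .
qed

lemma integral_cinner_precoded:
  assumes k: "k \<in> {1..K}"
  shows "(\<integral>\<omega>. cinner M (h k \<omega>) (\<lambda>i. \<Sum>k'=1..K. complex_of_real (s k') * w k' \<omega> i) \<partial>P)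
    = complex_of_real (s k * mrt_norm k)"
proof -
  have "(\<integral>\<omega>. cinner M (h k \<omega>) (\<lambda>i. \<Sum>k'=1..K. complex_of_real (s k') * w k' \<omega> i) \<partial>P)
    = (\<Sum>m\<in>amplitude_terms.
        if rx_entry k m = tx_entry m
        then amplitude_coef s m * entry_var beta sigma2 (rx_entry k m) else 0)"
    unfolding cinner_precoded_eq[OF k]
    by (rule integral_sum_cnj_mult) (simp_all add: rx_tx_entries[OF k])
  also have "\<dots> = complex_of_real (s k * mrt_norm k)"
    by (rule amplitude_mean[OF k])
  finally show ?thesis .
qed

lemma integral_cmod_sq_cinner_precoded:
  assumes k: "k \<in> {1..K}"
  shows "(\<integral>\<omega>. (cmod (cinner M (h k \<omega>) (\<lambda>i. \<Sum>k'=1..K. complex_of_real (s k') * w k' \<omega> i)))\<^sup>2 \<partial>P)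
    = real M * (s k)\<^sup>2 * (beta k - err k) + beta k * (\<Sum>k'=1..K. (s k')\<^sup>2)"
proof -
  have inj: "m = m'"
    if "m \<in> amplitude_terms" "m' \<in> amplitude_terms"
      "rx_entry k m = rx_entry k m'" "tx_entry m = tx_entry m'" for m m'
    using that by (auto simp: rx_entry_def tx_entry_def)
  have "(\<integral>\<omega>. (cmod (cinner M (h k \<omega>) (\<lambda>i. \<Sum>k'=1..K. complex_of_real (s k') * w k' \<omega> i)))\<^sup>2 \<partial>P)
    = (cmod (\<Sum>m\<in>amplitude_terms.
        if rx_entry k m = tx_entry m
        then amplitude_coef s m * entry_var beta sigma2 (rx_entry k m) else 0))\<^sup>2
      + (\<Sum>m\<in>amplitude_terms. (cmod (amplitude_coef s m))\<^sup>2
        * entry_var beta sigma2 (rx_entry k m) * entry_var beta sigma2 (tx_entry m))"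
    unfolding cinner_precoded_eq[OF k]
    by (rule integral_cmod_sq_bilinear) (simp_all add: rx_tx_entries[OF k] inj)
  also have "\<dots> = real M * (s k)\<^sup>2 * (beta k - err k) + beta k * (\<Sum>k'=1..K. (s k')\<^sup>2)"
    unfolding amplitude_mean[OF k] amplitude_spread[OF k]
    by (simp add: norm_mult power_mult_distrib mrt_norm_sq[OF k])
  finally show ?thesis .
qed

lemma precoder_eq_sum_indicator:
  assumes "k \<in> {1..K}"
  shows "w k \<omega> = (\<lambda>i. \<Sum>k'=1..K. complex_of_real (of_bool (k' = k)) * w k' \<omega> i)"
proof
  fix i
  have "(\<Sum>k'=1..K. complex_of_real (of_bool (k' = k)) * w k' \<omega> i)
      = (\<Sum>k'=1..K. if k' = k then w k' \<omega> i else 0)"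
    by (rule sum.cong) auto
  with assms show "w k \<omega> i = (\<Sum>k'=1..K. complex_of_real (of_bool (k' = k)) * w k' \<omega> i)"
    by simp
qed

lemma integral_cinner_mrt:
  assumes k: "k \<in> {1..K}"
  shows "(\<integral>\<omega>. cinner M (h k \<omega>) (w k \<omega>) \<partial>P) = complex_of_real (mrt_norm k)"
  unfolding precoder_eq_sum_indicator[OF k]
  using integral_cinner_precoded[OF k, of "\<lambda>k'. of_bool (k' = k)"] by simp

lemma integral_cmod_sq_cinner_mrt:
  assumes k: "k \<in> {1..K}" and k': "k' \<in> {1..K}"
  shows "(\<integral>\<omega>. (cmod (cinner M (h k \<omega>) (w k' \<omega>)))\<^sup>2 \<partial>P)
    = (if k' = k then real M * (beta k - err k) else 0) + beta k"
proof -
  have "(\<Sum>j=1..K. (of_bool (j = k') :: real)\<^sup>2) = 1"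
    using k' by (simp add: power2_eq_square flip: of_bool_conj)
  then show ?thesis
    unfolding precoder_eq_sum_indicator[OF k']
    using integral_cmod_sq_cinner_precoded[OF k, of "\<lambda>j. of_bool (j = k')"] by auto
qed

lemma harvested_energy_mrt:
  assumes k: "k \<in> {1..K}" and rhoRF: "rhoRF \<ge> 0" and ps: "\<forall>k'\<in>{1..K}. ps k' \<ge> 0"
  shows "harvested_energy P M K TD T etaEH alpha rhoRF ps h w k
    = real TD / real T * etaEH * (1 - alpha k) *
      (rhoRF * ps k * real M * (beta k - err k) + beta k * (\<Sum>k'=1..K. rhoRF * ps k'))"
  using integral_cmod_sq_cinner_precoded[OF k, of "\<lambda>k'. sqrt (rhoRF * ps k')"] rhoRF ps k
  by (simp add: harvested_energy_def mult_ac)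

lemma SINR_D_mrt:
  assumes k: "k \<in> {1..K}"
  shows "SINR_D P M K alpha rhoRF ps sRF ss h w k
    = rhoRF * ps k * alpha k * real M * (beta k - err k) /
      (alpha k * beta k * (\<Sum>k'=1..K. rhoRF * ps k') + alpha k * sRF k + ss k)"
proof -
  have gain: "(cmod (\<integral>\<omega>. cinner M (h k \<omega>) (w k \<omega>) \<partial>P))\<^sup>2 = real M * (beta k - err k)"
    using integral_cinner_mrt[OF k] mrt_norm_pos[OF k] mrt_norm_sq[OF k] by simp
  have "(\<Sum>k'=1..K. rhoRF * ps k' * (\<integral>\<omega>. (cmod (cinner M (h k \<omega>) (w k' \<omega>)))\<^sup>2 \<partial>P))
      = (\<Sum>k'=1..K. rhoRF * ps k' * ((if k' = k then real M * (beta k - err k) else 0) + beta k))"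
  proof (intro sum.cong refl)
    fix k' assume "k' \<in> {1..K}"
    then show "rhoRF * ps k' * (\<integral>\<omega>. (cmod (cinner M (h k \<omega>) (w k' \<omega>)))\<^sup>2 \<partial>P)
      = rhoRF * ps k' * ((if k' = k then real M * (beta k - err k) else 0) + beta k)"
      by (simp only: integral_cmod_sq_cinner_mrt[OF k])
  qed
  also have "\<dots> = (\<Sum>k'=1..K. (if k' = k then rhoRF * ps k * (real M * (beta k - err k)) else 0)
      + beta k * (rhoRF * ps k'))"
    by (intro sum.cong refl) (simp add: algebra_simps)
  also have "\<dots> = rhoRF * ps k * (real M * (beta k - err k)) + beta k * (\<Sum>k'=1..K. rhoRF * ps k')"
    using k by (simp add: sum.distrib sum.delta' sum_distrib_left)
  finally show ?thesis
    unfolding SINR_D_def Let_def gain by (simp add: algebra_simps)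
qed

end

theorem theorem3:
  fixes P :: "'a measure"
    and M K T TD :: nat
    and Phi :: complex and rho sigma2 rhoRF etaEH :: real
    and d :: "nat \<Rightarrow> complex"
    and beta pp ps sRF ss alpha :: "nat \<Rightarrow> real"
    and h z :: "nat \<Rightarrow> 'a \<Rightarrow> nat \<Rightarrow> complex"
  assumes "prob_space P"
    and "M > 0" and "K > 0" and "T > 0"
    and "Phi \<noteq> 0" and "rho > 0" and "sigma2 > 0"
    and "\<forall>i<M. cmod (d i) = 1"
    and "\<forall>k\<in>{1..K}. beta k > 0 \<and> pp k > 0"
    and "rhoRF > 0"
    and "\<forall>k\<in>{1..K}. ps k \<ge> 0 \<and> sRF k > 0 \<and> ss k > 0 \<and> 0 \<le> alpha k \<and> alpha k \<le> 1"
    and "0 < etaEH" and "etaEH \<le> 1"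
    \<comment> \<open>h_k ~ CN(0, beta_k I_M), z_k ~ CN(0, sigma^2 I_M), all mutually independent\<close>
    and "\<forall>k\<in>{1..K}. \<forall>i<M.
           distributed P lborel (\<lambda>\<omega>. Re (h k \<omega> i)) (normal_density 0 (sqrt (beta k / 2))) \<and>
           distributed P lborel (\<lambda>\<omega>. Im (h k \<omega> i)) (normal_density 0 (sqrt (beta k / 2))) \<and>
           distributed P lborel (\<lambda>\<omega>. Re (z k \<omega> i)) (normal_density 0 (sqrt (sigma2 / 2))) \<and>
           distributed P lborel (\<lambda>\<omega>. Im (z k \<omega> i)) (normal_density 0 (sqrt (sigma2 / 2)))"
    and "prob_space.indep_vars P (\<lambda>_. borel) (gauss_coords h z) (coord_index K M)"
    and "k \<in> {1..K}"
  shows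
    "let tau = real K;
         hhat = (\<lambda>k' \<omega>. chan_est rho tau (pp k') (beta k') Phi sigma2 d (h k' \<omega>) (z k' \<omega>));
         w = mrt_precoder P M hhat;
         e = est_err rho tau (pp k) (beta k) Phi sigma2
     in harvested_energy P M K TD T etaEH alpha rhoRF ps h w k
          \<ge> real TD / real T * etaEH * (1 - alpha k) *
             (rhoRF * ps k * real M * (beta k - e) + beta k * (\<Sum>k'=1..K. rhoRF * ps k'))
      \<and> rate_D P M K TD T alpha rhoRF ps sRF ss h w k
          \<ge> real TD / real T * log 2 (1 + rhoRF * ps k * alpha k * real M * (beta k - e) /
               (alpha k * beta k * (\<Sum>k'=1..K. rhoRF * ps k') + alpha k * sRF k + ss k))"
proof -
  have gauss:
    "circ_gauss_family P (channel_noise_entry h z) (entry_index K M) (entry_var beta sigma2)"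
    using assms by (intro circ_gauss_family_channel_noise_entry) auto
  interpret mrt_swipt P h z K M beta sigma2 Phi rho d pp
    using gauss assms by (simp add: mrt_swipt_def mrt_swipt_axioms_def)
  have k: "k \<in> {1..K}" and ps: "\<forall>k'\<in>{1..K}. ps k' \<ge> 0"
    using assms by auto
  have "mrt_precoder P M
      (\<lambda>k' \<omega>. chan_est rho (real K) (pp k') (beta k') Phi sigma2 d (h k' \<omega>) (z k' \<omega>)) = w"
    by (simp add: w_def hhat_def [abs_def])
  then show ?thesis
    using harvested_energy_mrt[OF k _ ps, of rhoRF] SINR_D_mrt[OF k] \<open>rhoRF > 0\<close>
    by (simp add: Let_def rate_D_def err_def)
qed

end
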